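(* Let $R$ be a dp-minimal integral domain with maximal ideal $\mathfrak M$. Then every prime ideal $\mathfrak p\neq\mathfrak M$ of $R$ is strongly prime.
   Context: Rings are commutative with identity; dp-minimal means the theory in the language of rings has dp-rank $1$ (such domains are local). An ideal $\mathfrak p$ of a domain $R$ is strongly prime if for all $x,y\in\mathrm{Frac}(R)$, $xy\in\mathfrak p$ implies $x\in\mathfrak p$ or $y\in\mathfrak p$. *)

theory Defs
  imports "HOL-Computational_Algebra.Polynomial_Factorial"
begin

datatype rterm = RVar nat | RZero | ROne | RAdd rterm rterm | RNeg rterm | RMul rterm rterm

datatype rform = REq rterm rterm | RNot rform | RConj rform rform | REx nat rform

fun teval :: "(nat \<Rightarrow> 'a::comm_ring_1) \<Rightarrow> rterm \<Rightarrow> 'a" where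
  "teval e (RVar n) = e n"
| "teval e RZero = 0"
| "teval e ROne = 1"
| "teval e (RAdd s t) = teval e s + teval e t"
| "teval e (RNeg s) = - teval e s"
| "teval e (RMul s t) = teval e s * teval e t"

fun feval :: "(nat \<Rightarrow> 'a::comm_ring_1) \<Rightarrow> rform \<Rightarrow> bool" where
  "feval e (REq s t) = (teval e s = teval e t)"
| "feval e (RNot f) = (\<not> feval e f)"
| "feval e (RConj f g) = (feval e f \<and> feval e g)"
| "feval e (REx v f) = (\<exists>a. feval (e(v := a)) f)"

text \<open>Formulas phi(x, y) are encoded with the object variable x being variable 0 and the
  parameter variables being all other variables; a parameter tuple is an assignment
  b :: nat => 'a (its value at 0 is irrelevant, since it is overwritten by x).\<close>

definition ict_pattern2 :: "'a::comm_ring_1 itself \<Rightarrow> rform \<Rightarrow> rform \<Rightarrow> nat \<Rightarrow> bool" where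
  "ict_pattern2 _ \<phi> \<psi> n \<longleftrightarrow>
     (\<exists>(b :: nat \<Rightarrow> nat \<Rightarrow> 'a) (c :: nat \<Rightarrow> nat \<Rightarrow> 'a).
        \<forall>i<n. \<forall>j<n. \<exists>a::'a.
          (\<forall>i'<n. feval ((b i')(0 := a)) \<phi> \<longleftrightarrow> i' = i) \<and>
          (\<forall>j'<n. feval ((c j')(0 := a)) \<psi> \<longleftrightarrow> j' = j))"

text \<open>dp-minimality of the complete theory Th(R) in the ring language: dp-rank exactly 1.
  dp-rank at most 1 means no ict-pattern of depth 2 (in a single variable) in the monster
  model; by compactness (and R being elementarily equivalent to the monster model) this is
  the same as: for all phi, psi there is a finite bound n on the width of such patterns in R.
  dp-rank not 0 means R is infinite.\<close>

definition dp_minimal :: "'a::comm_ring_1 itself \<Rightarrow> bool" where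
  "dp_minimal T \<longleftrightarrow> infinite (UNIV :: 'a set) \<and>
     (\<forall>\<phi> \<psi>. \<exists>n. \<not> ict_pattern2 T \<phi> \<psi> n)"

definition is_ideal :: "'a::comm_ring_1 set \<Rightarrow> bool" where
  "is_ideal I \<longleftrightarrow> 0 \<in> I \<and> (\<forall>x\<in>I. \<forall>y\<in>I. x + y \<in> I) \<and> (\<forall>r. \<forall>x\<in>I. r * x \<in> I)"

definition prime_ideal :: "'a::comm_ring_1 set \<Rightarrow> bool" where
  "prime_ideal P \<longleftrightarrow> is_ideal P \<and> P \<noteq> UNIV \<and> (\<forall>x y. x * y \<in> P \<longrightarrow> x \<in> P \<or> y \<in> P)"

definition maximal_ideal :: "'a::comm_ring_1 set \<Rightarrow> bool" where
  "maximal_ideal M \<longleftrightarrow> is_ideal M \<and> M \<noteq> UNIV \<and>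
     (\<forall>J. is_ideal J \<and> M \<subseteq> J \<longrightarrow> J = M \<or> J = UNIV)"

definition strongly_prime :: "'a::idom set \<Rightarrow> bool" where
  "strongly_prime P \<longleftrightarrow>
     (\<forall>x y :: 'a fract. x * y \<in> to_fract ` P \<longrightarrow> x \<in> to_fract ` P \<or> y \<in> to_fract ` P)"

end

theory Submission
  imports Defs
begin

(*
  Since the congruence formula x \<equiv> y1 (mod y2) has no ict-patterns of unbounded width, there
  is an N such that for all a, b and sequences x, y, two of b x_0, ..., b x_(N-1) are congruent
  modulo a or two of a y_0, ..., a y_(N-1) are congruent modulo b: otherwise the elements
  b x_i + a y_j realise a pattern of width N. Applied to geometric sequences this shows that R
  is local (if m + v = 1 with m, v non-units, compare m^N and v^N). For P \<noteq> M pick u in M - P;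
  its powers are pairwise incongruent modulo P, and the same principle gives: every t \<notin> P
  divides every element of P, and for all a, s some r \<notin> P has a dvd s r or s dvd a r.
  Hence if a/s is not in R, then s p / a lies in P for every p in P, which is strong primality.
*)

definition congruence_form :: rform where
  "congruence_form = REx 3 (REq (RVar 0) (RAdd (RVar 1) (RMul (RVar 2) (RVar 3))))"

lemma feval_congruence_form:
  "feval (e(0 := x)) congruence_form \<longleftrightarrow> e 2 dvd x - (e 1 :: 'a::comm_ring_1)"
proof -
  have "feval (e(0 := x)) congruence_form \<longleftrightarrow> (\<exists>z. x = e 1 + e 2 * z)"
    by (simp add: congruence_form_def)
  also have "\<dots> \<longleftrightarrow> e 2 dvd x - e 1"
    by (auto simp: dvd_def algebra_simps)
  finally show ?thesis .
qed

lemma dp_minimal_divisibility_grid: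
  assumes "dp_minimal TYPE('a::comm_ring_1)"
  obtains N :: nat where "\<And>(a::'a) b (x :: nat \<Rightarrow> 'a) y.
    (\<exists>i<N. \<exists>i'<N. i \<noteq> i' \<and> a dvd b * (x i - x i')) \<or>
    (\<exists>j<N. \<exists>j'<N. j \<noteq> j' \<and> b dvd a * (y j - y j'))"
proof -
  from assms obtain N where no_pattern: "\<not> ict_pattern2 TYPE('a) congruence_form congruence_form N"
    unfolding dp_minimal_def by blast
  have grid: "(\<exists>i<N. \<exists>i'<N. i \<noteq> i' \<and> a dvd b * (x i - x i')) \<or>
        (\<exists>j<N. \<exists>j'<N. j \<noteq> j' \<and> b dvd a * (y j - y j'))" for a b :: 'a and x y
  proof (rule ccontr)
    assume incongruent: "\<not> ?thesis"
    have x_incong: "a dvd b * (x i - x i') \<longleftrightarrow> i' = i" if "i < N" "i' < N" for i i'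
      using incongruent that by auto
    have y_incong: "b dvd a * (y j - y j') \<longleftrightarrow> j' = j" if "j < N" "j' < N" for j j'
      using incongruent that by auto
    define B :: "nat \<Rightarrow> nat \<Rightarrow> 'a" where "B i = (\<lambda>_. a)(1 := b * x i)" for i
    define C :: "nat \<Rightarrow> nat \<Rightarrow> 'a" where "C j = (\<lambda>_. b)(1 := a * y j)" for j
    have "\<exists>w. (\<forall>i'<N. feval ((B i')(0 := w)) congruence_form \<longleftrightarrow> i' = i) \<and>
              (\<forall>j'<N. feval ((C j')(0 := w)) congruence_form \<longleftrightarrow> j' = j)"
      if "i < N" "j < N" for i j
    proof -
      define w where "w = b * x i + a * y j"
      have "a dvd w - b * x i' \<longleftrightarrow> i' = i" if "i' < N" for i'
      proof -
        have "w - b * x i' = b * (x i - x i') + a * y j"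
          by (simp add: w_def algebra_simps)
        then show ?thesis
          using x_incong[OF \<open>i < N\<close> that] by (simp add: dvd_add_left_iff)
      qed
      moreover have "b dvd w - a * y j' \<longleftrightarrow> j' = j" if "j' < N" for j'
      proof -
        have "w - a * y j' = a * (y j - y j') + b * x i"
          by (simp add: w_def algebra_simps)
        then show ?thesis
          using y_incong[OF \<open>j < N\<close> that] by (simp add: dvd_add_left_iff)
      qed
      ultimately show ?thesis
        by (auto simp: B_def C_def feval_congruence_form)
    qed
    then have "ict_pattern2 TYPE('a) congruence_form congruence_form N"
      unfolding ict_pattern2_def by blast
    with no_pattern show False by blast
  qed
  show ?thesis by (rule that[OF grid])
qed

lemma dvd_if_power_dvd_mult_diff_powers:
  fixes t q :: "'a::idom"
  assumes "t \<noteq> 0" "i < N" "i' < N" "i \<noteq> i'" and "t ^ N dvd q * (t ^ i - t ^ i')"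
  shows "t dvd q"
proof -
  have "t dvd q" if "k < N" "k < l" "t ^ N dvd q * (t ^ k - t ^ l)" for k l
  proof -
    have "t ^ k * t dvd t ^ N"
      using le_imp_power_dvd[of "Suc k" N t] \<open>k < N\<close> by (simp add: mult.commute)
    also have "t ^ N dvd t ^ k * (q - q * t ^ (l - k))"
      using that by (simp add: algebra_simps flip: power_add)
    finally have "t dvd q - q * t ^ (l - k)"
      using \<open>t \<noteq> 0\<close> by simp
    moreover have "t dvd q * t ^ (l - k)"
      using \<open>k < l\<close> by simp
    ultimately show ?thesis
      by (metis diff_add_cancel dvd_add)
  qed
  moreover have "t ^ N dvd q * (t ^ i' - t ^ i)"
    using assms(5) by (metis dvd_minus_iff minus_diff_eq mult_minus_right)
  ultimately show ?thesis
    using assms by (metis linorder_neq_iff)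
qed

lemma dp_minimal_power_grid:
  assumes "dp_minimal TYPE('a::idom)"
  obtains N :: nat where "\<And>(t::'a) b (y :: nat \<Rightarrow> 'a). t \<noteq> 0 \<Longrightarrow>
    t dvd b \<or> (\<exists>j<N. \<exists>j'<N. j \<noteq> j' \<and> b dvd t ^ N * (y j - y j'))"
proof -
  obtain N :: nat where grid: "\<And>(a::'a) b x y.
      (\<exists>i<N. \<exists>i'<N. i \<noteq> i' \<and> a dvd b * (x i - x i')) \<or>
      (\<exists>j<N. \<exists>j'<N. j \<noteq> j' \<and> b dvd a * (y j - y j'))"
    using dp_minimal_divisibility_grid[OF assms] by blast
  have "t dvd b \<or> (\<exists>j<N. \<exists>j'<N. j \<noteq> j' \<and> b dvd t ^ N * (y j - y j'))"
    if "t \<noteq> 0" for t b :: 'a and y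
  proof -
    have "t dvd b" if "i < N" "i' < N" "i \<noteq> i'" "t ^ N dvd b * (t ^ i - t ^ i')" for i i'
      using dvd_if_power_dvd_mult_diff_powers \<open>t \<noteq> 0\<close> that by blast
    then show ?thesis
      using grid[of "t ^ N" b "\<lambda>i. t ^ i" y] by blast
  qed
  then show ?thesis by (rule that)
qed

lemma dvd_one_if_add_eq_one_dvd_power:
  fixes m v :: "'a::comm_ring_1"
  assumes "m + v = 1" and "m dvd v ^ n"
  shows "m dvd 1"
proof -
  have "m dvd v ^ n - 1"
  proof (induction n)
    case (Suc n)
    have "v ^ Suc n - 1 = v * (v ^ n - 1) - m"
      using assms(1) by (simp add: algebra_simps)
    with Suc show ?case by simp
  qed simp
  with assms(2) have "m dvd v ^ n - (v ^ n - 1)"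
    by (rule dvd_diff)
  then show ?thesis by simp
qed

lemma ideal_mult_left: "is_ideal I \<Longrightarrow> x \<in> I \<Longrightarrow> r * x \<in> I"
  unfolding is_ideal_def by blast

lemma ideal_add: "is_ideal I \<Longrightarrow> x \<in> I \<Longrightarrow> y \<in> I \<Longrightarrow> x + y \<in> I"
  unfolding is_ideal_def by blast

lemma ideal_dvd_closed: "is_ideal I \<Longrightarrow> x \<in> I \<Longrightarrow> x dvd y \<Longrightarrow> y \<in> I"
  by (auto simp: mult.commute intro: ideal_mult_left elim!: dvdE)

lemma proper_ideal_not_dvd_one: "is_ideal I \<Longrightarrow> I \<noteq> UNIV \<Longrightarrow> x \<in> I \<Longrightarrow> \<not> x dvd 1"
  by (meson UNIV_I dvd_trans one_dvd ideal_dvd_closed subsetI subset_antisym)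

lemma prime_idealD: "prime_ideal P \<Longrightarrow> x * y \<in> P \<Longrightarrow> x \<in> P \<or> y \<in> P"
  unfolding prime_ideal_def by blast

lemma prime_ideal_power_notin: "prime_ideal P \<Longrightarrow> x \<notin> P \<Longrightarrow> x ^ n \<notin> P"
proof (induction n)
  case 0
  then show ?case
    using proper_ideal_not_dvd_one[of P 1] by (auto simp: prime_ideal_def)
next
  case (Suc n)
  then show ?case by (auto dest: prime_idealD)
qed

lemma maximal_ideal_add_mult_eq_one:
  assumes "maximal_ideal M" and "x \<notin> M"
  obtains m r where "m \<in> M" and "m + x * r = 1"
proof -
  have M: "is_ideal M" "\<And>J. is_ideal J \<Longrightarrow> M \<subseteq> J \<Longrightarrow> J = M \<or> J = UNIV"
    using assms(1) by (auto simp: maximal_ideal_def)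
  have "0 \<in> M"
    using M(1) by (simp add: is_ideal_def)
  define J where "J = {m + x * r | m r. m \<in> M}"
  have J_intro: "m + x * r \<in> J" if "m \<in> M" for m r
    unfolding J_def using that by blast
  have "is_ideal J"
    unfolding is_ideal_def
  proof (intro conjI ballI allI)
    show "0 \<in> J"
      using J_intro[OF \<open>0 \<in> M\<close>, of 0] by simp
  next
    fix a b assume "a \<in> J" "b \<in> J"
    then obtain m1 r1 m2 r2 where "a = m1 + x * r1" "b = m2 + x * r2" "m1 \<in> M" "m2 \<in> M"
      unfolding J_def by blast
    then show "a + b \<in> J"
      using J_intro[of "m1 + m2" "r1 + r2"] ideal_add[OF M(1)] by (simp add: algebra_simps)
  next
    fix s a assume "a \<in> J"
    then obtain m r where "a = m + x * r" "m \<in> M"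
      unfolding J_def by blast
    then show "s * a \<in> J"
      using J_intro[of "s * m" "s * r"] ideal_mult_left[OF M(1)] by (simp add: algebra_simps)
  qed
  moreover have "M \<subseteq> J"
    using J_intro[of _ 0] by auto
  moreover have "x \<in> J"
    using J_intro[OF \<open>0 \<in> M\<close>, of 1] by simp
  ultimately have "1 \<in> J"
    using M(2) assms(2) by blast
  then obtain m r where "m \<in> M" "1 = m + x * r"
    unfolding J_def by blast
  then show ?thesis
    using that by simp
qed

lemma dp_minimal_nonunit_in_maximal:
  fixes M :: "'a::idom set"
  assumes dp: "dp_minimal TYPE('a)" and "maximal_ideal M" and "\<not> x dvd 1"
  shows "x \<in> M"
proof (rule ccontr)
  assume "x \<notin> M"
  with \<open>maximal_ideal M\<close> obtain m r where "m \<in> M" and "m + x * r = 1"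
    by (rule maximal_ideal_add_mult_eq_one)
  define v where "v = x * r"
  have "m + v = 1" "v + m = 1"
    using \<open>m + x * r = 1\<close> by (simp_all add: v_def add.commute)
  have m_nonunit: "\<not> m dvd 1"
    using \<open>maximal_ideal M\<close> \<open>m \<in> M\<close> proper_ideal_not_dvd_one
    by (auto simp: maximal_ideal_def)
  have v_nonunit: "\<not> v dvd 1"
    using \<open>\<not> x dvd 1\<close> unfolding v_def by (meson dvd_mult_left)
  have "m \<noteq> 0" "v \<noteq> 0"
    using \<open>m + v = 1\<close> m_nonunit v_nonunit by auto
  obtain N :: nat where grid: "\<And>(t::'a) b y. t \<noteq> 0 \<Longrightarrow>
      t dvd b \<or> (\<exists>j<N. \<exists>j'<N. j \<noteq> j' \<and> b dvd t ^ N * (y j - y j'))"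
    using dp_minimal_power_grid[OF dp] by blast
  from grid[OF \<open>m \<noteq> 0\<close>, of "v ^ N" "\<lambda>j. v ^ j"] show False
  proof
    assume "m dvd v ^ N"
    with \<open>m + v = 1\<close> have "m dvd 1"
      by (rule dvd_one_if_add_eq_one_dvd_power)
    with m_nonunit show False ..
  next
    assume "\<exists>j<N. \<exists>j'<N. j \<noteq> j' \<and> v ^ N dvd m ^ N * (v ^ j - v ^ j')"
    then have "v dvd m ^ N"
      using dvd_if_power_dvd_mult_diff_powers[OF \<open>v \<noteq> 0\<close>] by blast
    with \<open>v + m = 1\<close> have "v dvd 1"
      by (rule dvd_one_if_add_eq_one_dvd_power)
    with v_nonunit show False ..
  qed
qed

lemma dp_minimal_prime_subset_maximal:
  fixes M P :: "'a::idom set"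
  assumes "dp_minimal TYPE('a)" and "maximal_ideal M" and "prime_ideal P"
  shows "P \<subseteq> M"
proof
  fix x assume "x \<in> P"
  with \<open>prime_ideal P\<close> have "\<not> x dvd 1"
    using proper_ideal_not_dvd_one by (auto simp: prime_ideal_def)
  with assms(1,2) show "x \<in> M"
    by (rule dp_minimal_nonunit_in_maximal)
qed

lemma diff_powers_notin_prime_ideal:
  assumes "prime_ideal P" and "is_ideal M" "M \<noteq> UNIV" "P \<subseteq> M"
    and "u \<in> M" "u \<notin> P" and "i \<noteq> j"
  shows "u ^ i - u ^ j \<notin> P"
proof -
  have "u ^ k - u ^ l \<notin> P" if "k < l" for k l
  proof
    assume "u ^ k - u ^ l \<in> P"
    moreover have "u ^ k - u ^ l = u ^ k * (1 - u ^ (l - k))"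
      using that by (simp add: algebra_simps flip: power_add)
    ultimately have "u ^ k * (1 - u ^ (l - k)) \<in> P"
      by simp
    moreover have "u ^ k \<notin> P"
      using assms(1,6) by (rule prime_ideal_power_notin)
    ultimately have "1 - u ^ (l - k) \<in> M"
      using prime_idealD[OF assms(1)] assms(4) by blast
    moreover have "u ^ (l - k) \<in> M"
    proof -
      have "u ^ (l - k) = u ^ (l - Suc k) * u"
        using that by (simp add: Suc_diff_Suc flip: power_Suc2)
      then show ?thesis
        using ideal_mult_left[OF assms(2,5)] by simp
    qed
    ultimately have "(1 - u ^ (l - k)) + u ^ (l - k) \<in> M"
      by (rule ideal_add[OF assms(2)])
    then have "1 \<in> M"
      by simp
    from proper_ideal_not_dvd_one[OF assms(2,3) this] show False
      by simp
  qed
  moreover have "u ^ j - u ^ i \<in> P" if "u ^ i - u ^ j \<in> P"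
  proof -
    have "is_ideal P"
      using assms(1) by (simp add: prime_ideal_def)
    from ideal_mult_left[OF this that, of "-1"] show ?thesis
      by simp
  qed
  ultimately show ?thesis
    using \<open>i \<noteq> j\<close> by (metis linorder_neq_iff)
qed

locale dp_minimal_nonmaximal_prime =
  fixes M P :: "'a::idom set"
  assumes dp_minimal: "dp_minimal TYPE('a)"
    and maximal: "maximal_ideal M"
    and prime: "prime_ideal P"
    and prime_ne_maximal: "P \<noteq> M"
begin

lemma ideal: "is_ideal P"
  using prime by (simp add: prime_ideal_def)

lemma nonzero_if_notin: "t \<notin> P \<Longrightarrow> t \<noteq> 0"
  using ideal by (auto simp: is_ideal_def)

lemma exists_incongruent_powers: "\<exists>u. \<forall>i j. i \<noteq> j \<longrightarrow> u ^ i - u ^ j \<notin> P"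
proof -
  have "P \<subseteq> M"
    using dp_minimal maximal prime by (rule dp_minimal_prime_subset_maximal)
  then obtain u where "u \<in> M" "u \<notin> P"
    using prime_ne_maximal by blast
  with maximal prime \<open>P \<subseteq> M\<close> show ?thesis
    using diff_powers_notin_prime_ideal by (metis maximal_ideal_def)
qed

lemma notin_dvd_in:
  assumes "t \<notin> P" and "q \<in> P"
  shows "t dvd q"
proof -
  obtain u where incongruent: "\<And>i j. i \<noteq> j \<Longrightarrow> u ^ i - u ^ j \<notin> P"
    using exists_incongruent_powers by blast
  obtain N :: nat where grid: "\<And>(t::'a) b y. t \<noteq> 0 \<Longrightarrow>
      t dvd b \<or> (\<exists>j<N. \<exists>j'<N. j \<noteq> j' \<and> b dvd t ^ N * (y j - y j'))"
    using dp_minimal_power_grid[OF dp_minimal] by blast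
  have "\<not> q dvd t ^ N * (u ^ j - u ^ j')" if "j \<noteq> j'" for j j'
  proof
    assume "q dvd t ^ N * (u ^ j - u ^ j')"
    then have "t ^ N * (u ^ j - u ^ j') \<in> P"
      by (rule ideal_dvd_closed[OF ideal \<open>q \<in> P\<close>])
    moreover have "t ^ N \<notin> P"
      using prime \<open>t \<notin> P\<close> by (rule prime_ideal_power_notin)
    ultimately show False
      using prime_idealD[OF prime] incongruent[OF that] by blast
  qed
  then show ?thesis
    using grid[OF nonzero_if_notin[OF \<open>t \<notin> P\<close>], of q "\<lambda>j. u ^ j"] by blast
qed

lemma exists_notin_dvd_mult:
  "\<exists>r. r \<notin> P \<and> (a dvd s * r \<or> s dvd a * r)"
proof -
  obtain u where incongruent: "\<And>i j. i \<noteq> j \<Longrightarrow> u ^ i - u ^ j \<notin> P"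
    using exists_incongruent_powers by blast
  obtain N :: nat where grid: "\<And>(a::'a) b x y.
      (\<exists>i<N. \<exists>i'<N. i \<noteq> i' \<and> a dvd b * (x i - x i')) \<or>
      (\<exists>j<N. \<exists>j'<N. j \<noteq> j' \<and> b dvd a * (y j - y j'))"
    using dp_minimal_divisibility_grid[OF dp_minimal] by blast
  from grid[of a s "\<lambda>i. u ^ i" "\<lambda>i. u ^ i"] incongruent show ?thesis
    by blast
qed

lemma cancel_notin_factor:
  assumes "e \<notin> P" and "f \<in> P" and "e * c = a * f"
  obtains q where "q \<in> P" and "c = a * q"
proof -
  obtain q where "f = e * q"
    using notin_dvd_in[OF assms(1,2)] by blast
  with assms(1,2) have "q \<in> P"
    using prime_idealD[OF prime] by blast
  moreover have "c = a * q"
    using assms(3) \<open>f = e * q\<close> nonzero_if_notin[OF assms(1)]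
    by (simp add: mult.left_commute)
  ultimately show ?thesis
    by (rule that)
qed

lemma mult_eq_mult_in_if_not_dvd:
  assumes "\<not> s dvd a" and "p \<in> P"
  obtains q where "q \<in> P" and "s * p = a * q"
proof -
  obtain r where "r \<notin> P" and "a dvd s * r \<or> s dvd a * r"
    using exists_notin_dvd_mult by blast
  then consider w where "s * r = a * w" | w where "a * r = s * w"
    by (auto elim!: dvdE)
  then show ?thesis
  proof cases
    case (1 w)
    then have "r * (s * p) = a * (w * p)"
      by (simp add: algebra_simps)
    then show ?thesis
      using \<open>r \<notin> P\<close> ideal_mult_left[OF ideal \<open>p \<in> P\<close>] that
      by (blast elim: cancel_notin_factor)
  next
    case (2 w)
    have "w \<notin> P"
    proof
      assume "w \<in> P"
      then obtain k where "w = r * k"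
        using notin_dvd_in[OF \<open>r \<notin> P\<close>] by blast
      with 2 have "a = s * k"
        using nonzero_if_notin[OF \<open>r \<notin> P\<close>] by (simp add: algebra_simps)
      with assms(1) show False
        by simp
    qed
    moreover from 2 have "w * (s * p) = a * (r * p)"
      by (simp add: algebra_simps)
    ultimately show ?thesis
      using ideal_mult_left[OF ideal \<open>p \<in> P\<close>] that
      by (blast elim: cancel_notin_factor)
  qed
qed

lemma in_to_fract_image_if_mult_in:
  assumes "x \<notin> range to_fract" and "x * y \<in> to_fract ` P"
  shows "y \<in> to_fract ` P"
proof -
  obtain a s where x: "x = Fract a s" and "s \<noteq> 0"
    by (cases x)
  have "\<not> s dvd a"
  proof
    assume "s dvd a"
    then obtain k where "a = s * k" ..
    then have "x = to_fract k"
      using x \<open>s \<noteq> 0\<close> by (simp add: to_fract_def eq_fract)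
    with assms(1) show False
      by blast
  qed
  then have "a \<noteq> 0"
    by auto
  obtain p where "p \<in> P" and p: "x * y = to_fract p"
    using assms(2) by blast
  obtain q where "q \<in> P" and "s * p = a * q"
    using mult_eq_mult_in_if_not_dvd[OF \<open>\<not> s dvd a\<close> \<open>p \<in> P\<close>] .
  have "to_fract a * y = to_fract s * (x * y)"
    using x \<open>s \<noteq> 0\<close> by (simp add: Fract_conv_to_fract)
  also have "\<dots> = to_fract a * to_fract q"
    using p \<open>s * p = a * q\<close> by (metis to_fract_mult)
  finally have "y = to_fract q"
    using \<open>a \<noteq> 0\<close> by simp
  with \<open>q \<in> P\<close> show ?thesis
    by blast
qed

end

theorem mainTheorem14:
  fixes M P :: "'a::idom set"
  assumes "dp_minimal TYPE('a)"
    and "maximal_ideal M"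
    and "prime_ideal P"
    and "P \<noteq> M"
  shows "strongly_prime P"
proof -
  interpret dp_minimal_nonmaximal_prime M P
    using assms by unfold_locales
  have "x \<in> to_fract ` P \<or> y \<in> to_fract ` P" if xy: "x * y \<in> to_fract ` P" for x y :: "'a fract"
  proof (cases "x \<in> range to_fract \<and> y \<in> range to_fract")
    case True
    then obtain a b where "x = to_fract a" "y = to_fract b"
      by blast
    with xy have "a * b \<in> P"
      by (auto simp flip: to_fract_mult)
    with \<open>x = to_fract a\<close> \<open>y = to_fract b\<close> show ?thesis
      using prime_idealD[OF prime] by blast
  next
    case False
    with xy in_to_fract_image_if_mult_in[of x y] in_to_fract_image_if_mult_in[of y x]
    show ?thesis
      by (auto simp: mult.commute)
  qed
  then show ?thesis
    unfolding strongly_prime_def by blast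
qed

end
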